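(* Let $A$ be an operator on a Banach space $X$ that admits a $\mathcal B$-calculus. Then \[\sup_{\alpha>0}\alpha\int_{\mathbb R}\big|\langle(\alpha+i\beta+A)^{-2}x,x^*\rangle\big|\,d\beta<\infty\quad\text{for all }x\in X,\ x^*\in X^*.\]
   Context: $\mathbb C_+=\{z:\Re z>0\}$. $\mathcal B$ is the Banach algebra of holomorphic $f$ on $\mathbb C_+$ with $\|f\|_{\mathcal B_0}:=\int_0^\infty\sup_{\beta\in\mathbb R}|f'(\alpha+i\beta)|\,d\alpha<\infty$, with norm $\|f\|_{\mathcal B}=\sup_{\mathbb C_+}|f|+\|f\|_{\mathcal B_0}$. For $z\in\mathbb C_+$, $r_z(\lambda)=(z+\lambda)^{-1}$ ($r_z\in\mathcal B$). An operator $A$ on $X$ admits a $\mathcal B$-calculus if $A$ is densely defined, $\sigma(A)\subset\overline{\mathbb C}_+$, and there is a bounded algebra homomorphism $\Phi:\mathcal B\to L(X)$ with $\Phi(r_z)=(z+A)^{-1}$ for all $z\in\mathbb C_+$. *)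

theory Defs
  imports "HOL-Analysis.Analysis"
begin

class complex_banach = banach +
  fixes cscale :: "complex \<Rightarrow> 'a \<Rightarrow> 'a"
  assumes cscale_add_right: "cscale c (x + y) = cscale c x + cscale c y"
    and cscale_add_left: "cscale (a + b) x = cscale a x + cscale b x"
    and cscale_cscale: "cscale a (cscale b x) = cscale (a * b) x"
    and cscale_of_real: "cscale (complex_of_real r) x = scaleR r x"
    and norm_cscale: "norm (cscale c x) = cmod c * norm x"

definition cbl_op :: "('a::complex_banach \<Rightarrow> 'a) \<Rightarrow> bool" where
  "cbl_op T \<longleftrightarrow> bounded_linear T \<and> (\<forall>c x. T (cscale c x) = cscale c (T x))"

definition cbl_fun :: "('a::complex_banach \<Rightarrow> complex) \<Rightarrow> bool" where
  "cbl_fun \<phi> \<longleftrightarrow> bounded_linear \<phi> \<and> (\<forall>c x. \<phi> (cscale c x) = c * \<phi> x)"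

definition densely_defined_op :: "'a::complex_banach set \<Rightarrow> ('a \<Rightarrow> 'a) \<Rightarrow> bool" where
  "densely_defined_op D A \<longleftrightarrow>
     0 \<in> D \<and> (\<forall>x\<in>D. \<forall>y\<in>D. x + y \<in> D) \<and> (\<forall>c. \<forall>x\<in>D. cscale c x \<in> D) \<and>
     (\<forall>x\<in>D. \<forall>y\<in>D. A (x + y) = A x + A y) \<and> (\<forall>c. \<forall>x\<in>D. A (cscale c x) = cscale c (A x)) \<and>
     closure D = UNIV"

definition resolvent_set :: "'a::complex_banach set \<Rightarrow> ('a \<Rightarrow> 'a) \<Rightarrow> complex set" where
  "resolvent_set D A = {l. \<exists>R. cbl_op R \<and>
      (\<forall>y. R y \<in> D \<and> cscale l (R y) - A (R y) = y) \<and>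
      (\<forall>x\<in>D. R (cscale l x - A x) = x)}"

definition op_spectrum :: "'a::complex_banach set \<Rightarrow> ('a \<Rightarrow> 'a) \<Rightarrow> complex set" where
  "op_spectrum D A = - resolvent_set D A"

definition res_inv :: "'a::complex_banach set \<Rightarrow> ('a \<Rightarrow> 'a) \<Rightarrow> complex \<Rightarrow> 'a \<Rightarrow> 'a" where
  "res_inv D A z y = (THE u. u \<in> D \<and> cscale z u + A u = y)"

definition rhp :: "complex set" where
  "rhp = {z. 0 < Re z}"

definition B0_norm :: "(complex \<Rightarrow> complex) \<Rightarrow> ennreal" where
  "B0_norm f = (\<integral>\<^sup>+ \<alpha>. indicator {0<..} \<alpha> *
       (SUP \<beta>. ennreal (cmod (deriv f (Complex \<alpha> \<beta>)))) \<partial>lborel)"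

definition B_alg :: "(complex \<Rightarrow> complex) set" where
  "B_alg = {f. f holomorphic_on rhp \<and> bounded (f ` rhp) \<and> B0_norm f < \<infinity>}"

definition B_norm :: "(complex \<Rightarrow> complex) \<Rightarrow> real" where
  "B_norm f = (SUP z\<in>rhp. cmod (f z)) + enn2real (B0_norm f)"

definition r_fun :: "complex \<Rightarrow> complex \<Rightarrow> complex" where
  "r_fun z = (\<lambda>w. inverse (z + w))"

text \<open>Bounded algebra homomorphism \<Phi> : B \<rightarrow> L(X). Elements of B are functions on the
  half-plane, so \<Phi> f may depend only on the restriction of f to rhp.\<close>
definition bounded_alg_hom_B :: "((complex \<Rightarrow> complex) \<Rightarrow> 'a::complex_banach \<Rightarrow> 'a) \<Rightarrow> bool" where
  "bounded_alg_hom_B \<Phi> \<longleftrightarrow>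
     (\<forall>f\<in>B_alg. cbl_op (\<Phi> f)) \<and>
     (\<forall>f\<in>B_alg. \<forall>g\<in>B_alg. (\<forall>z\<in>rhp. f z = g z) \<longrightarrow> \<Phi> f = \<Phi> g) \<and>
     (\<forall>f\<in>B_alg. \<forall>g\<in>B_alg. \<Phi> (\<lambda>z. f z + g z) = (\<lambda>x. \<Phi> f x + \<Phi> g x)) \<and>
     (\<forall>c. \<forall>f\<in>B_alg. \<Phi> (\<lambda>z. c * f z) = (\<lambda>x. cscale c (\<Phi> f x))) \<and>
     (\<forall>f\<in>B_alg. \<forall>g\<in>B_alg. \<Phi> (\<lambda>z. f z * g z) = \<Phi> f \<circ> \<Phi> g) \<and>
     (\<exists>M. \<forall>f\<in>B_alg. \<forall>x. norm (\<Phi> f x) \<le> M * B_norm f * norm x)"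

definition admits_B_calculus :: "'a::complex_banach set \<Rightarrow> ('a \<Rightarrow> 'a) \<Rightarrow> bool" where
  "admits_B_calculus D A \<longleftrightarrow>
     densely_defined_op D A \<and>
     op_spectrum D A \<subseteq> {l. 0 \<le> Re l} \<and>
     (\<exists>\<Phi>. bounded_alg_hom_B \<Phi> \<and> (\<forall>z\<in>rhp. \<Phi> (r_fun z) = res_inv D A z))"

end

theory Submission
  imports Defs
begin

text \<open>Put \<open>z_k = \<alpha> + i (t + k \<alpha>)\<close> for \<open>k \<in> \<int>\<close>. For finite \<open>K\<close> and \<open>|c_k| \<le> 1\<close> the function
  \<open>F = \<Sum>\<^bsub>k\<in>K\<^esub> c_k r_{z_k}^2\<close> satisfies \<open>|F| \<le> C/\<alpha>^2\<close> and \<open>|F'(\<lambda>)| \<le> C \<alpha>^{-3/2} (\<alpha> + Re \<lambda>)^{-3/2}\<close>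
  on the half-plane, because the points \<open>z_k\<close> are \<open>\<alpha>\<close>-separated; hence \<open>\<parallel>F\<parallel>_\<B> \<le> C/\<alpha>^2\<close> uniformly
  in \<open>t\<close>, \<open>K\<close> and \<open>c\<close>. Applying the calculus with \<open>c_k\<close> chosen to cancel the phases of
  \<open>\<langle>(z_k + A)^{-2} x, x^*\<rangle>\<close> gives \<open>\<Sum>\<^bsub>k\<^esub> |\<langle>(z_k + A)^{-2} x, x^*\<rangle>| \<le> C'/\<alpha>^2\<close>, and averaging over
  \<open>t \<in> [0, \<alpha>)\<close> turns this into \<open>\<integral> |\<langle>(\<alpha> + i\<beta> + A)^{-2} x, x^*\<rangle>| d\<beta> \<le> C'/\<alpha>\<close>.\<close>

lemma nn_integral_shifted_powr_le:
  fixes c p :: real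
  assumes c: "c > 0" and p: "p > 1"
  shows "(\<integral>\<^sup>+ x. indicator {0<..} x * ennreal ((c + x) powr (-p)) \<partial>lborel) \<le> ennreal (c powr (1-p) / (p-1))"
proof -
  define f where "f = (\<lambda>u::real. indicator {c<..} u * ennreal (u powr (-p)))"
  have "(\<integral>\<^sup>+ x. indicator {0<..} x * ennreal ((c + x) powr (-p)) \<partial>lborel) = (\<integral>\<^sup>+ x. f (c + 1 * x) \<partial>lborel)"
    by (intro nn_integral_cong) (auto simp: f_def indicator_def)
  also have "\<dots> = (\<integral>\<^sup>+ u. f u \<partial>lborel)"
    using nn_integral_real_affine[of f 1 c] by (simp add: f_def)
  also have "\<dots> \<le> (\<integral>\<^sup>+ u. ennreal (indicator {c..} u * u powr (-p)) \<partial>lborel)"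
    by (intro nn_integral_mono) (auto simp: f_def indicator_def)
  also have "\<dots> = ennreal (-(c powr (-p+1)) / (-p+1))"
    using c p has_integral_powr_to_inf[of "-p" c]
    by (intro nn_integral_has_integral_lebesgue[where \<Omega>="{c..}"]) auto
  also have "-(c powr (-p+1)) / (-p+1) = c powr (1-p) / (p-1)"
    using p by (simp add: field_simps)
  finally show ?thesis .
qed

lemma summable_one_plus_square_powr:
  fixes p :: real
  assumes p: "p > 1/2"
  shows "summable (\<lambda>n. (1 + real n ^ 2) powr (-p))"
proof (rule summable_comparison_test')
  show "summable (\<lambda>n. real n powr (-2 * p))"
    using p by (subst summable_real_powr_iff) simp
  fix n :: nat assume "1 \<le> n"
  have "(1 + real n ^ 2) powr (-p) \<le> (real n ^ 2) powr (-p)"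
    using \<open>1 \<le> n\<close> p by (intro powr_mono2') auto
  also have "\<dots> = real n powr (-2 * p)"
    using \<open>1 \<le> n\<close> powr_powr[of "real n" 2 "-p"] by simp
  finally show "norm ((1 + real n ^ 2) powr (-p)) \<le> real n powr (-2 * p)" by simp
qed

lemma sum_shifted_int_le_twice_suminf:
  fixes \<phi> :: "nat \<Rightarrow> real" and K :: "int set" and k0 :: int
  assumes nonneg: "\<And>n. 0 \<le> \<phi> n" and "summable \<phi>" and "finite K"
  shows "(\<Sum>k\<in>K. \<phi> (nat \<bar>k - k0\<bar>)) \<le> 2 * suminf \<phi>"
proof -
  have half_le: "(\<Sum>k\<in>L. \<phi> (nat \<bar>k - k0\<bar>)) \<le> suminf \<phi>"
    if "L \<subseteq> K" and inj: "inj_on (\<lambda>k. nat \<bar>k - k0\<bar>) L" for L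
  proof -
    have "(\<Sum>k\<in>L. \<phi> (nat \<bar>k - k0\<bar>)) = (\<Sum>n\<in>(\<lambda>k. nat \<bar>k - k0\<bar>) ` L. \<phi> n)"
      using inj by (simp add: sum.reindex)
    also have "\<dots> \<le> suminf \<phi>"
      using \<open>finite K\<close> \<open>L \<subseteq> K\<close> finite_subset
      by (intro sum_le_suminf \<open>summable \<phi>\<close>) (auto simp: nonneg)
    finally show ?thesis .
  qed
  have "(\<Sum>k\<in>K. \<phi> (nat \<bar>k - k0\<bar>))
      = (\<Sum>k\<in>{k\<in>K. k0 \<le> k}. \<phi> (nat \<bar>k - k0\<bar>)) + (\<Sum>k\<in>{k\<in>K. k < k0}. \<phi> (nat \<bar>k - k0\<bar>))"
    using \<open>finite K\<close> by (subst sum.union_disjoint[symmetric]) (auto intro: sum.cong)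
  also have "\<dots> \<le> suminf \<phi> + suminf \<phi>"
    by (intro add_mono half_le) (auto simp: inj_on_def)
  finally show ?thesis by simp
qed

definition bracket_sum :: "real \<Rightarrow> real" where
  "bracket_sum p = (\<Sum>n. (1 + real n ^ 2) powr (-p))"

lemma bracket_sum_nonneg: "p > 1/2 \<Longrightarrow> 0 \<le> bracket_sum p"
  unfolding bracket_sum_def by (intro suminf_nonneg summable_one_plus_square_powr) auto

lemma lattice_dist_sq_lower_bound:
  fixes \<alpha> A y :: real and k :: int
  assumes "\<alpha> > 0" "\<alpha> \<le> A"
  shows "\<alpha>^2 / 4 * (1 + of_int (k - round (- (y / \<alpha>))) ^ 2) \<le> A^2 + (y + of_int k * \<alpha>)^2"
proof -
  define d where "d = real_of_int (k - round (- (y / \<alpha>)))"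
  define e where "e = y / \<alpha> + of_int (round (- (y / \<alpha>)))"
  have "\<bar>e\<bar> \<le> 1/2"
    unfolding e_def using of_int_round_abs_le[of "- (y / \<alpha>)"] by linarith
  then have e_sq: "e^2 \<le> 1/4"
    using power_mono[of "\<bar>e\<bar>" "1/2" 2] by (simp add: power2_eq_square)
  have d_sq: "d^2 \<le> 2 * (d + e)^2 + 2 * e^2"
    using zero_le_power2[of "d + 2 * e"] by (simp add: power2_eq_square algebra_simps)
  \<comment> \<open>Abstracted so that the squares stay atoms for the arithmetic.\<close>
  have "(1 + D) / 4 \<le> 1 + S" if "D \<le> 2 * S + 2 * E" "E \<le> 1/4" "0 \<le> S" for D S E :: real
    using that by (simp add: field_simps)
  from this[OF d_sq e_sq zero_le_power2] have key: "(1 + d^2) / 4 \<le> 1 + (d + e)^2" .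
  have "\<alpha>^2 / 4 * (1 + d^2) = \<alpha>^2 * ((1 + d^2) / 4)" by simp
  also have "\<dots> \<le> \<alpha>^2 * (1 + (d + e)^2)"
    using key by (rule mult_left_mono) simp
  also have "\<dots> = \<alpha>^2 + (\<alpha> * (d + e))^2"
    by (simp add: power2_eq_square algebra_simps)
  also have "\<alpha> * (d + e) = y + of_int k * \<alpha>"
    using \<open>\<alpha> > 0\<close> by (simp add: d_def e_def field_simps)
  also have "\<alpha>^2 \<le> A^2"
    using assms by (simp add: power_mono)
  finally show ?thesis by (simp add: d_def)
qed

lemma lattice_sum_powr_le:
  fixes \<alpha> A y p :: real and K :: "int set"
  assumes "\<alpha> > 0" "\<alpha> \<le> A" "p > 1/2" "finite K"
  shows "(\<Sum>k\<in>K. (A^2 + (y + of_int k * \<alpha>)^2) powr (-p)) \<le> 2 * (4 / \<alpha>^2) powr p * bracket_sum p"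
proof -
  define k0 where "k0 = round (- (y / \<alpha>))"
  define \<phi> where "\<phi> n = (1 + real n ^ 2) powr (-p)" for n :: nat
  have term_le: "(A^2 + (y + of_int k * \<alpha>)^2) powr (-p) \<le> (4 / \<alpha>^2) powr p * \<phi> (nat \<bar>k - k0\<bar>)" for k :: int
  proof -
    have pos: "0 < \<alpha>^2 / 4 * (1 + of_int (k - k0) ^ 2)"
      using \<open>\<alpha> > 0\<close> by (simp add: add_pos_nonneg)
    have "(A^2 + (y + of_int k * \<alpha>)^2) powr (-p) \<le> (\<alpha>^2 / 4 * (1 + of_int (k - k0) ^ 2)) powr (-p)"
      using lattice_dist_sq_lower_bound[OF assms(1,2), where y=y and k=k] pos \<open>p > 1/2\<close>
      by (intro powr_mono2') (auto simp: k0_def)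
    also have "\<dots> = (4 / \<alpha>^2) powr p * \<phi> (nat \<bar>k - k0\<bar>)"
      using \<open>\<alpha> > 0\<close> by (simp add: \<phi>_def powr_mult powr_minus_divide powr_divide)
    finally show ?thesis .
  qed
  have "(\<Sum>k\<in>K. (A^2 + (y + of_int k * \<alpha>)^2) powr (-p)) \<le> (4 / \<alpha>^2) powr p * (\<Sum>k\<in>K. \<phi> (nat \<bar>k - k0\<bar>))"
    by (simp add: sum_distrib_left sum_mono term_le)
  also have "\<dots> \<le> (4 / \<alpha>^2) powr p * (2 * suminf \<phi>)"
    using \<open>p > 1/2\<close> \<open>finite K\<close> unfolding \<phi>_def
    by (intro mult_left_mono sum_shifted_int_le_twice_suminf summable_one_plus_square_powr) auto
  finally show ?thesis
    unfolding bracket_sum_def \<phi>_def by (simp add: mult_ac)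
qed

lemma indicator_symmetric_interval_eq_sum_cells:
  fixes \<alpha> x :: real
  assumes "\<alpha> > 0"
  shows "(indicator {- (real N * \<alpha>) ..< real N * \<alpha>} x :: ennreal)
     = (\<Sum>k\<in>{- int N ..< int N}. indicator {of_int k * \<alpha> ..< (of_int k + 1) * \<alpha>} x)"
proof -
  have cell_iff: "x \<in> {of_int k * \<alpha> ..< (of_int k + 1) * \<alpha>} \<longleftrightarrow> k = \<lfloor>x / \<alpha>\<rfloor>" for k
  proof -
    have "k = \<lfloor>x / \<alpha>\<rfloor> \<longleftrightarrow> of_int k \<le> x / \<alpha> \<and> x / \<alpha> < of_int k + 1"
      by (metis floor_eq_iff)
    then show ?thesis
      using \<open>\<alpha> > 0\<close> by (simp add: pos_le_divide_eq pos_divide_less_eq)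
  qed
  have range_iff: "x \<in> {- (real N * \<alpha>) ..< real N * \<alpha>} \<longleftrightarrow> \<lfloor>x / \<alpha>\<rfloor> \<in> {- int N ..< int N}"
    using \<open>\<alpha> > 0\<close> by (simp add: le_floor_iff floor_less_iff pos_le_divide_eq pos_divide_less_eq)
  have "(\<Sum>k\<in>{- int N ..< int N}. indicator {of_int k * \<alpha> ..< (of_int k + 1) * \<alpha>} x :: ennreal)
      = (\<Sum>k\<in>{- int N ..< int N}. if k = \<lfloor>x / \<alpha>\<rfloor> then 1 else 0)"
    by (intro sum.cong refl) (simp only: indicator_def cell_iff of_bool_def)
  also have "\<dots> = indicator {- (real N * \<alpha>) ..< real N * \<alpha>} x"
    by (simp only: sum.delta finite_atLeastLessThan_int indicator_def range_iff of_bool_def)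
  finally show ?thesis ..
qed

lemma nn_integral_symmetric_interval_eq_periodization:
  fixes s :: "real \<Rightarrow> ennreal" and \<alpha> :: real
  assumes "\<alpha> > 0" and [measurable]: "s \<in> borel_measurable borel"
  shows "(\<integral>\<^sup>+ x. s x * indicator {- (real N * \<alpha>) ..< real N * \<alpha>} x \<partial>lborel)
       = (\<integral>\<^sup>+ u. (\<Sum>k\<in>{- int N ..< int N}. s (of_int k * \<alpha> + u)) * indicator {0..<\<alpha>} u \<partial>lborel)"
proof -
  define C where "C k = {of_int k * \<alpha> ..< (of_int k + 1) * \<alpha>}" for k :: int
  have cell: "(\<integral>\<^sup>+ x. s x * indicator (C k) x \<partial>lborel)
      = (\<integral>\<^sup>+ u. s (of_int k * \<alpha> + u) * indicator {0..<\<alpha>} u \<partial>lborel)" for k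
  proof -
    have "(\<integral>\<^sup>+ x. s x * indicator (C k) x \<partial>lborel)
        = (\<integral>\<^sup>+ u. s (of_int k * \<alpha> + u) * indicator (C k) (of_int k * \<alpha> + u) \<partial>lborel)"
      using nn_integral_real_affine[of "\<lambda>x. s x * indicator (C k) x" 1 "of_int k * \<alpha>"]
      by (simp add: C_def)
    also have "\<dots> = (\<integral>\<^sup>+ u. s (of_int k * \<alpha> + u) * indicator {0..<\<alpha>} u \<partial>lborel)"
      by (intro nn_integral_cong) (simp add: C_def indicator_def algebra_simps)
    finally show ?thesis .
  qed
  have "(\<integral>\<^sup>+ x. s x * indicator {- (real N * \<alpha>) ..< real N * \<alpha>} x \<partial>lborel)
      = (\<integral>\<^sup>+ x. (\<Sum>k\<in>{- int N ..< int N}. s x * indicator (C k) x) \<partial>lborel)"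
    unfolding C_def
    by (simp add: indicator_symmetric_interval_eq_sum_cells[OF \<open>\<alpha> > 0\<close>] sum_distrib_left)
  also have "\<dots> = (\<Sum>k\<in>{- int N ..< int N}. \<integral>\<^sup>+ x. s x * indicator (C k) x \<partial>lborel)"
    by (rule nn_integral_sum) (simp add: C_def)
  also have "\<dots> = (\<integral>\<^sup>+ u. (\<Sum>k\<in>{- int N ..< int N}. s (of_int k * \<alpha> + u) * indicator {0..<\<alpha>} u) \<partial>lborel)"
    unfolding cell by (rule nn_integral_sum[symmetric]) measurable
  finally show ?thesis by (simp add: sum_distrib_right)
qed

lemma nn_integral_le_of_periodization_le_measurable:
  fixes s :: "real \<Rightarrow> ennreal" and \<alpha> b :: real
  assumes "\<alpha> > 0" and [measurable]: "s \<in> borel_measurable borel"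
    and periodization_le: "\<And>u K. finite K \<Longrightarrow> (\<Sum>k\<in>K. s (u + of_int k * \<alpha>)) \<le> ennreal b"
  shows "(\<integral>\<^sup>+ x. s x \<partial>lborel) \<le> ennreal (\<alpha> * b)"
proof -
  define I where "I N = {- (real N * \<alpha>) ..< real N * \<alpha>}" for N :: nat
  have "incseq I"
  proof (rule incseq_SucI)
    fix N
    have "real N * \<alpha> \<le> real (Suc N) * \<alpha>"
      using \<open>\<alpha> > 0\<close> by (intro mult_right_mono) auto
    then show "I N \<subseteq> I (Suc N)"
      unfolding I_def by auto
  qed
  have inc: "incseq (\<lambda>N x. s x * indicator (I N) x)"
  proof (rule incseq_SucI, rule le_funI)
    fix N x
    show "s x * indicator (I N) x \<le> s x * indicator (I (Suc N)) x"
      using incseq_SucD[OF \<open>incseq I\<close>, of N] by (intro mult_left_mono) (auto simp: indicator_def)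
  qed
  have exhaust: "(SUP N. s x * indicator (I N) x) = s x" for x
  proof (rule antisym)
    show "(SUP N. s x * indicator (I N) x) \<le> s x"
      by (intro SUP_least) (auto simp: indicator_def)
    obtain N :: nat where "\<bar>x\<bar> / \<alpha> < real N"
      using reals_Archimedean2 by blast
    then have "x \<in> I N"
      using \<open>\<alpha> > 0\<close> by (auto simp: I_def pos_divide_less_eq)
    then show "s x \<le> (SUP N. s x * indicator (I N) x)"
      by (intro SUP_upper2[of N]) auto
  qed
  have "(\<integral>\<^sup>+ x. s x \<partial>lborel) = (\<integral>\<^sup>+ x. (SUP N. s x * indicator (I N) x) \<partial>lborel)"
    by (simp add: exhaust)
  also have "\<dots> = (SUP N. \<integral>\<^sup>+ x. s x * indicator (I N) x \<partial>lborel)"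
    by (rule nn_integral_monotone_convergence_SUP[OF inc]) (simp add: I_def)
  also have "\<dots> \<le> ennreal (\<alpha> * b)"
  proof (rule SUP_least)
    fix N
    have "(\<integral>\<^sup>+ x. s x * indicator (I N) x \<partial>lborel)
        = (\<integral>\<^sup>+ u. (\<Sum>k\<in>{- int N ..< int N}. s (of_int k * \<alpha> + u)) * indicator {0..<\<alpha>} u \<partial>lborel)"
      unfolding I_def by (rule nn_integral_symmetric_interval_eq_periodization) fact+
    also have "\<dots> \<le> (\<integral>\<^sup>+ u. ennreal b * indicator {0..<\<alpha>} u \<partial>lborel)"
      using periodization_le[of "{- int N ..< int N}"]
      by (intro nn_integral_mono mult_right_mono) (auto simp: add.commute)
    also have "\<dots> = ennreal (\<alpha> * b)"
      using \<open>\<alpha> > 0\<close> by (simp add: nn_integral_cmult_indicator ennreal_mult' mult.commute)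
    finally show "(\<integral>\<^sup>+ x. s x * indicator (I N) x \<partial>lborel) \<le> ennreal (\<alpha> * b)" .
  qed
  finally show ?thesis .
qed

lemma nn_integral_le_of_periodization_le:
  fixes g :: "real \<Rightarrow> real" and \<alpha> b :: real
  assumes "\<alpha> > 0" and nonneg: "\<And>x. 0 \<le> g x"
    and periodization_le: "\<And>u K. finite K \<Longrightarrow> (\<Sum>k\<in>K. g (u + of_int k * \<alpha>)) \<le> b"
  shows "(\<integral>\<^sup>+ x. ennreal (g x) \<partial>lborel) \<le> ennreal (\<alpha> * b)"
  \<comment> \<open>No measurability of \<open>g\<close> is needed: the integral is a supremum over simple minorants.\<close>
  unfolding nn_integral_def
proof (rule SUP_least)
  fix s assume "s \<in> {s. simple_function lborel s \<and> s \<le> (\<lambda>x. ennreal (g x))}"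
  then have s: "simple_function lborel s" "\<And>x. s x \<le> ennreal (g x)"
    by (auto simp: le_fun_def)
  have "(\<Sum>k\<in>K. s (u + of_int k * \<alpha>)) \<le> ennreal b" if "finite K" for u K
  proof -
    have "(\<Sum>k\<in>K. s (u + of_int k * \<alpha>)) \<le> (\<Sum>k\<in>K. ennreal (g (u + of_int k * \<alpha>)))"
      by (intro sum_mono s(2))
    also have "\<dots> = ennreal (\<Sum>k\<in>K. g (u + of_int k * \<alpha>))"
      by (simp add: nonneg)
    also have "\<dots> \<le> ennreal b"
      by (intro ennreal_leI periodization_le that)
    finally show ?thesis .
  qed
  then have "integral\<^sup>N lborel s \<le> ennreal (\<alpha> * b)"
    using borel_measurable_simple_function[OF s(1)]
    by (intro nn_integral_le_of_periodization_le_measurable[OF \<open>\<alpha> > 0\<close>]) auto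
  then show "integral\<^sup>S lborel s \<le> ennreal (\<alpha> * b)"
    by (simp add: nn_integral_eq_simple_integral[OF s(1)])
qed

lemma open_rhp: "open rhp"
  unfolding rhp_def using open_halfspace_Re_gt[of 0] by simp

lemma B0_norm_le_of_deriv_le:
  assumes "\<And>x \<beta>. x > 0 \<Longrightarrow> cmod (deriv f (Complex x \<beta>)) \<le> h x"
  shows "B0_norm f \<le> (\<integral>\<^sup>+ x. indicator {0<..} x * ennreal (h x) \<partial>lborel)"
  unfolding B0_norm_def
proof (rule nn_integral_mono)
  fix x :: real
  have "(SUP \<beta>. ennreal (cmod (deriv f (Complex x \<beta>)))) \<le> ennreal (h x)" if "x > 0"
    using assms[OF that] by (intro SUP_least ennreal_leI)
  then show "indicator {0<..} x * (SUP \<beta>. ennreal (cmod (deriv f (Complex x \<beta>))))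
      \<le> indicator {0<..} x * ennreal (h x)"
    by (cases "x > 0") auto
qed

lemma B_alg_B_norm_le_of_bounds:
  fixes f :: "complex \<Rightarrow> complex" and C E c p :: real
  assumes hol: "f holomorphic_on rhp"
    and bound: "\<And>w. w \<in> rhp \<Longrightarrow> cmod (f w) \<le> C"
    and deriv_bound: "\<And>x \<beta>. x > 0 \<Longrightarrow> cmod (deriv f (Complex x \<beta>)) \<le> E * (c + x) powr (-p)"
    and "c > 0" "p > 1" "E \<ge> 0"
  shows "f \<in> B_alg" and "B_norm f \<le> C + E * (c powr (1 - p) / (p - 1))"
proof -
  have "B0_norm f \<le> (\<integral>\<^sup>+ x. ennreal E * (indicator {0<..} x * ennreal ((c + x) powr (-p))) \<partial>lborel)"
    using B0_norm_le_of_deriv_le[OF deriv_bound] \<open>E \<ge> 0\<close> by (simp add: ennreal_mult mult_ac)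
  also have "\<dots> = ennreal E * (\<integral>\<^sup>+ x. indicator {0<..} x * ennreal ((c + x) powr (-p)) \<partial>lborel)"
    by (rule nn_integral_cmult) measurable
  also have "\<dots> \<le> ennreal E * ennreal (c powr (1 - p) / (p - 1))"
    using nn_integral_shifted_powr_le[OF \<open>c > 0\<close> \<open>p > 1\<close>] by (rule mult_left_mono) simp
  also have "\<dots> = ennreal (E * (c powr (1 - p) / (p - 1)))"
    using \<open>E \<ge> 0\<close> by (rule ennreal_mult'[symmetric])
  finally have B0: "B0_norm f \<le> ennreal (E * (c powr (1 - p) / (p - 1)))" .
  have "rhp \<noteq> {}"
    by (auto simp: rhp_def intro: exI[of _ 1])
  then have "(SUP w\<in>rhp. cmod (f w)) \<le> C"
    using bound by (rule cSUP_least)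
  moreover have "enn2real (B0_norm f) \<le> E * (c powr (1 - p) / (p - 1))"
    using enn2real_mono[OF B0] \<open>E \<ge> 0\<close> \<open>p > 1\<close> by simp
  ultimately show "B_norm f \<le> C + E * (c powr (1 - p) / (p - 1))"
    unfolding B_norm_def by linarith
  have "bounded (f ` rhp)"
    using bound by (auto simp: bounded_iff)
  moreover have "B0_norm f < \<infinity>"
    using B0 by (simp add: le_less_trans)
  ultimately show "f \<in> B_alg"
    unfolding B_alg_def using hol by simp
qed

lemma B_norm_nonneg:
  assumes "f \<in> B_alg"
  shows "0 \<le> B_norm f"
proof -
  have "bdd_above ((\<lambda>w. cmod (f w)) ` rhp)"
    using assms by (auto simp: B_alg_def bounded_norm_comp bounded_imp_bdd_above image_image)
  then have "0 \<le> (SUP w\<in>rhp. cmod (f w))"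
    by (rule cSUP_upper2[of _ _ 1]) (auto simp: rhp_def)
  then show ?thesis
    unfolding B_norm_def by simp
qed

lemma r_fun_in_B_alg:
  assumes z: "0 < Re z"
  shows "r_fun z \<in> B_alg"
proof -
  have nonzero: "z + w \<noteq> 0" if "w \<in> rhp" for w
    using that z by (auto simp: rhp_def complex_eq_iff)
  have deriv: "(r_fun z has_field_derivative - inverse ((z + w)^2)) (at w)" if "w \<in> rhp" for w
    unfolding r_fun_def using nonzero[OF that]
    by (auto intro!: derivative_eq_intros simp: power2_eq_square)
  have Re_le: "Re z + Re w \<le> cmod (z + w)" for w
    using complex_Re_le_cmod[of "z + w"] by simp
  show ?thesis
  proof (rule B_alg_B_norm_le_of_bounds(1)[where E = 1 and c = "Re z" and p = 2])
    show "r_fun z holomorphic_on rhp"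
      using deriv by (auto simp: holomorphic_on_open[OF open_rhp])
    show "cmod (r_fun z w) \<le> inverse (Re z)" if "w \<in> rhp" for w
      using that z Re_le[of w] unfolding r_fun_def norm_inverse
      by (intro le_imp_inverse_le) (auto simp: rhp_def)
    show "cmod (deriv (r_fun z) (Complex x \<beta>)) \<le> 1 * (Re z + x) powr (-2)" if "x > 0" for x \<beta>
    proof -
      have "cmod (deriv (r_fun z) (Complex x \<beta>)) = inverse (cmod (z + Complex x \<beta>)) ^ 2"
        using that by (simp add: DERIV_imp_deriv[OF deriv] rhp_def norm_inverse norm_power power_inverse)
      also have "\<dots> \<le> inverse (Re z + x) ^ 2"
        using that z Re_le[of "Complex x \<beta>"] by (intro power_mono le_imp_inverse_le) auto
      also have "\<dots> = 1 * (Re z + x) powr (-2)"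
        using that z by (simp add: powr_minus power_inverse)
      finally show ?thesis .
    qed
  qed (use z in auto)
qed

definition lattice_point :: "real \<Rightarrow> real \<Rightarrow> int \<Rightarrow> complex" where
  "lattice_point \<alpha> t k = Complex \<alpha> (t + of_int k * \<alpha>)"

definition resolvent_square_sum :: "real \<Rightarrow> real \<Rightarrow> int set \<Rightarrow> (int \<Rightarrow> complex) \<Rightarrow> complex \<Rightarrow> complex" where
  "resolvent_square_sum \<alpha> t K c =
     (\<lambda>w. \<Sum>k\<in>K. c k * (r_fun (lattice_point \<alpha> t k) w * r_fun (lattice_point \<alpha> t k) w))"

lemma lattice_point_in_rhp: "\<alpha> > 0 \<Longrightarrow> lattice_point \<alpha> t k \<in> rhp"
  by (simp add: lattice_point_def rhp_def)

lemma norm_lattice_point_add_sq: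
  "cmod (lattice_point \<alpha> t k + w)^2 = (\<alpha> + Re w)^2 + ((t + Im w) + of_int k * \<alpha>)^2"
  unfolding lattice_point_def cmod_power2 by (simp add: algebra_simps)

lemma lattice_point_add_nonzero: "\<alpha> > 0 \<Longrightarrow> w \<in> rhp \<Longrightarrow> lattice_point \<alpha> t k + w \<noteq> 0"
  by (auto simp: lattice_point_def rhp_def complex_eq_iff)

lemma r_fun_square_has_field_derivative:
  assumes "z + w \<noteq> 0"
  shows "((\<lambda>w. r_fun z w * r_fun z w) has_field_derivative -2 * inverse (z + w) ^ 3) (at w)"
proof -
  have "((\<lambda>w. z + w) has_field_derivative 1) (at w)"
    by (auto intro!: derivative_eq_intros)
  from DERIV_inverse_fun[OF this assms]
  have inv: "((\<lambda>w. inverse (z + w)) has_field_derivative - (inverse (z + w) * inverse (z + w))) (at w)"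
    by (simp add: power2_eq_square)
  show ?thesis
    unfolding r_fun_def
    by (rule DERIV_cong[OF DERIV_mult'[OF inv inv]]) (simp add: power3_eq_cube)
qed

lemma resolvent_square_sum_has_field_derivative:
  assumes "\<alpha> > 0" "w \<in> rhp"
  shows "(resolvent_square_sum \<alpha> t K c has_field_derivative
           (\<Sum>k\<in>K. c k * (-2 * inverse (lattice_point \<alpha> t k + w) ^ 3))) (at w)"
  unfolding resolvent_square_sum_def
  using r_fun_square_has_field_derivative[OF lattice_point_add_nonzero[OF assms]]
  by (intro DERIV_sum DERIV_cmult) auto

lemma norm_resolvent_square_sum_le:
  assumes "\<alpha> > 0" "finite K" "\<And>k. cmod (c k) \<le> 1" "w \<in> rhp"
  shows "cmod (resolvent_square_sum \<alpha> t K c w) \<le> 8 / \<alpha>^2 * bracket_sum 1"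
proof -
  let ?\<rho> = "\<lambda>k. (\<alpha> + Re w)^2 + ((t + Im w) + of_int k * \<alpha>)^2"
  have "cmod (resolvent_square_sum \<alpha> t K c w)
      \<le> (\<Sum>k\<in>K. cmod (c k * (r_fun (lattice_point \<alpha> t k) w * r_fun (lattice_point \<alpha> t k) w)))"
    unfolding resolvent_square_sum_def by (rule norm_sum)
  also have "\<dots> \<le> (\<Sum>k\<in>K. ?\<rho> k powr (-1))"
  proof (rule sum_mono)
    fix k
    have "cmod (c k * (r_fun (lattice_point \<alpha> t k) w * r_fun (lattice_point \<alpha> t k) w))
        = cmod (c k) / cmod (lattice_point \<alpha> t k + w)^2"
      by (simp add: r_fun_def norm_mult norm_inverse power2_eq_square divide_inverse)
    also have "\<dots> \<le> 1 / cmod (lattice_point \<alpha> t k + w)^2"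
      using assms(3) by (rule divide_right_mono) simp
    also have "\<dots> = ?\<rho> k powr (-1)"
      using lattice_point_add_nonzero[OF assms(1,4)]
      by (simp add: norm_lattice_point_add_sq[symmetric] powr_minus_divide)
    finally show "cmod (c k * (r_fun (lattice_point \<alpha> t k) w * r_fun (lattice_point \<alpha> t k) w)) \<le> ?\<rho> k powr (-1)" .
  qed
  also have "\<dots> \<le> 2 * (4 / \<alpha>^2) powr 1 * bracket_sum 1"
    using assms by (intro lattice_sum_powr_le) (auto simp: rhp_def)
  finally show ?thesis
    using assms(1) by simp
qed

lemma norm_deriv_resolvent_square_sum_le:
  assumes "\<alpha> > 0" "finite K" "\<And>k. cmod (c k) \<le> 1" "w \<in> rhp"
  shows "cmod (deriv (resolvent_square_sum \<alpha> t K c) w)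
    \<le> 4 * (4 / \<alpha>^2) powr (3/4) * bracket_sum (3/4) * (\<alpha> + Re w) powr (-3/2)"
proof -
  define A where "A = \<alpha> + Re w"
  let ?\<rho> = "\<lambda>k. A^2 + ((t + Im w) + of_int k * \<alpha>)^2"
  have "A > 0"
    using assms by (simp add: A_def rhp_def)
  have term_le: "cmod (c k * (-2 * inverse (lattice_point \<alpha> t k + w) ^ 3))
      \<le> 2 * A powr (-3/2) * ?\<rho> k powr (-3/4)" for k
  proof -
    \<comment> \<open>Half of the decay goes into \<open>(\<alpha> + Re w)^{-3/2}\<close>; the exponent \<open>3/4 > 1/2\<close> left over
      is still summable along the lattice.\<close>
    have "?\<rho> k powr (-3/2) = ?\<rho> k powr (-3/4) * ?\<rho> k powr (-3/4)"
      by (simp flip: powr_add)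
    also have "\<dots> \<le> (A^2) powr (-3/4) * ?\<rho> k powr (-3/4)"
      using \<open>A > 0\<close> by (intro mult_right_mono powr_mono2') auto
    also have "(A^2) powr (-3/4) = A powr (-3/2)"
      using \<open>A > 0\<close> powr_powr[of A 2 "-3/4"] by simp
    finally have \<rho>_le: "?\<rho> k powr (-3/2) \<le> A powr (-3/2) * ?\<rho> k powr (-3/4)" .
    have "inverse x ^ 3 = (x^2) powr (-3/2)" if "x > 0" for x :: real
    proof -
      have "(x^2) powr (-3/2) = x powr (-3)"
        using that powr_powr[of x 2 "-3/2"] by simp
      also have "\<dots> = inverse x ^ 3"
        using that by (simp add: powr_minus power_inverse)
      finally show ?thesis ..
    qed
    from this[of "cmod (lattice_point \<alpha> t k + w)"]
    have "inverse (cmod (lattice_point \<alpha> t k + w)) ^ 3 = (cmod (lattice_point \<alpha> t k + w)^2) powr (-3/2)"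
      using lattice_point_add_nonzero[OF assms(1,4)] by simp
    then have "cmod (c k * (-2 * inverse (lattice_point \<alpha> t k + w) ^ 3)) = 2 * cmod (c k) * ?\<rho> k powr (-3/2)"
      by (simp add: norm_mult norm_power norm_inverse norm_lattice_point_add_sq A_def)
    also have "\<dots> \<le> 2 * ?\<rho> k powr (-3/2)"
      using assms(3)[of k] by (simp add: mult_left_le_one_le)
    finally show ?thesis
      using \<rho>_le by simp
  qed
  have "cmod (deriv (resolvent_square_sum \<alpha> t K c) w)
      \<le> (\<Sum>k\<in>K. cmod (c k * (-2 * inverse (lattice_point \<alpha> t k + w) ^ 3)))"
    unfolding DERIV_imp_deriv[OF resolvent_square_sum_has_field_derivative[OF assms(1,4)]]
    by (rule norm_sum)
  also have "\<dots> \<le> (\<Sum>k\<in>K. 2 * A powr (-3/2) * ?\<rho> k powr (-3/4))"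
    by (rule sum_mono) (rule term_le)
  also have "\<dots> = 2 * A powr (-3/2) * (\<Sum>k\<in>K. ?\<rho> k powr (-3/4))"
    by (simp add: sum_distrib_left)
  also have "\<dots> \<le> 2 * A powr (-3/2) * (2 * (4 / \<alpha>^2) powr (3/4) * bracket_sum (3/4))"
    using assms lattice_sum_powr_le[where \<alpha>=\<alpha> and A=A and p="3/4" and K=K and y="t + Im w"]
    by (intro mult_left_mono) (auto simp: A_def rhp_def)
  finally show ?thesis
    by (simp add: A_def mult_ac)
qed

lemma resolvent_square_sum_in_B_alg:
  assumes "\<alpha> > 0" "finite K" "\<And>k. cmod (c k) \<le> 1"
  shows "resolvent_square_sum \<alpha> t K c \<in> B_alg"
    and "B_norm (resolvent_square_sum \<alpha> t K c)
           \<le> (8 * bracket_sum 1 + 8 * 4 powr (3/4) * bracket_sum (3/4)) / \<alpha>^2"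
proof -
  define E where "E = 4 * (4 / \<alpha>^2) powr (3/4) * bracket_sum (3/4)"
  have E: "E \<ge> 0"
    by (simp add: E_def bracket_sum_nonneg)
  have hol: "resolvent_square_sum \<alpha> t K c holomorphic_on rhp"
    unfolding holomorphic_on_open[OF open_rhp]
    using resolvent_square_sum_has_field_derivative[OF \<open>\<alpha> > 0\<close>] by blast
  have deriv_le: "cmod (deriv (resolvent_square_sum \<alpha> t K c) (Complex x \<beta>)) \<le> E * (\<alpha> + x) powr (-(3/2))"
    if "x > 0" for x \<beta>
    using norm_deriv_resolvent_square_sum_le[OF assms, of "Complex x \<beta>" t] that
    by (simp add: E_def rhp_def)
  have "(3/2 :: real) > 1" by simp
  note bounds = B_alg_B_norm_le_of_bounds[OF hol norm_resolvent_square_sum_le[OF assms] deriv_le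
      \<open>\<alpha> > 0\<close> this E]
  show "resolvent_square_sum \<alpha> t K c \<in> B_alg"
    using bounds(1) by simp
  have "(\<alpha>^2) powr (3/4) = \<alpha> powr (3/2)"
    using \<open>\<alpha> > 0\<close> powr_powr[of \<alpha> 2 "3/4"] by simp
  then have "(4 / \<alpha>^2) powr (3/4) * \<alpha> powr (1 - 3/2) = 4 powr (3/4) * (\<alpha> powr (1 - 3/2) / \<alpha> powr (3/2))"
    using \<open>\<alpha> > 0\<close> by (simp add: powr_divide)
  also have "\<dots> = 4 powr (3/4) * \<alpha> powr (-2)"
    by (simp flip: powr_diff)
  also have "\<dots> = 4 powr (3/4) / \<alpha>^2"
    using \<open>\<alpha> > 0\<close> by (simp add: powr_minus_divide)
  finally have scale: "(4 / \<alpha>^2) powr (3/4) * \<alpha> powr (1 - 3/2) = 4 powr (3/4) / \<alpha>^2" .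
  have "E * (\<alpha> powr (1 - 3/2) / (3/2 - 1))
      = 8 * bracket_sum (3/4) * ((4 / \<alpha>^2) powr (3/4) * \<alpha> powr (1 - 3/2))"
    by (simp add: E_def mult_ac)
  also have "\<dots> = 8 * 4 powr (3/4) * bracket_sum (3/4) / \<alpha>^2"
    unfolding scale by simp
  finally show "B_norm (resolvent_square_sum \<alpha> t K c)
      \<le> (8 * bracket_sum 1 + 8 * 4 powr (3/4) * bracket_sum (3/4)) / \<alpha>^2"
    using bounds(2) by (simp add: add_divide_distrib)
qed

lemma
  assumes "bounded_alg_hom_B \<Phi>" "f \<in> B_alg" "g \<in> B_alg"
  shows bounded_alg_hom_B_add: "\<Phi> (\<lambda>z. f z + g z) = (\<lambda>x. \<Phi> f x + \<Phi> g x)"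
    and bounded_alg_hom_B_mult: "\<Phi> (\<lambda>z. f z * g z) = \<Phi> f \<circ> \<Phi> g"
  using assms unfolding bounded_alg_hom_B_def by blast+

lemma bounded_alg_hom_B_scale:
  "bounded_alg_hom_B \<Phi> \<Longrightarrow> f \<in> B_alg \<Longrightarrow> \<Phi> (\<lambda>z. c * f z) = (\<lambda>x. cscale c (\<Phi> f x))"
  unfolding bounded_alg_hom_B_def by blast

lemma bounded_alg_hom_B_norm_le:
  assumes "bounded_alg_hom_B \<Phi>"
  obtains M where "M \<ge> 0" and "\<And>f x. f \<in> B_alg \<Longrightarrow> norm (\<Phi> f x) \<le> M * B_norm f * norm x"
proof -
  obtain M where M: "\<And>f x. f \<in> B_alg \<Longrightarrow> norm (\<Phi> f x) \<le> M * B_norm f * norm x"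
    using assms unfolding bounded_alg_hom_B_def by blast
  have "norm (\<Phi> f x) \<le> max M 0 * B_norm f * norm x" if "f \<in> B_alg" for f x
  proof -
    have "M * B_norm f \<le> max M 0 * B_norm f"
      using B_norm_nonneg[OF that] by (intro mult_right_mono) auto
    then show ?thesis
      using M[OF that, of x] by (meson mult_right_mono norm_ge_zero order_trans)
  qed
  then show ?thesis
    using that[of "max M 0"] by simp
qed

lemma bounded_alg_hom_B_sum:
  assumes hom: "bounded_alg_hom_B \<Phi>" and "finite K"
    and partial_sums: "\<And>L. L \<subseteq> K \<Longrightarrow> (\<lambda>w. \<Sum>k\<in>L. f k w) \<in> B_alg"
  shows "\<Phi> (\<lambda>w. \<Sum>k\<in>K. f k w) x = (\<Sum>k\<in>K. \<Phi> (f k) x)"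
proof -
  have "\<Phi> (\<lambda>w. \<Sum>k\<in>L. f k w) x = (\<Sum>k\<in>L. \<Phi> (f k) x)" if "L \<subseteq> K" for L
    using finite_subset[OF that \<open>finite K\<close>] that
  proof (induction L rule: finite_induct)
    case empty
    have "(\<lambda>w. 0) \<in> B_alg"
      using partial_sums[of "{}"] by simp
    from fun_cong[OF bounded_alg_hom_B_scale[OF hom this, of 0], of x]
    have "\<Phi> (\<lambda>w. 0) x = cscale 0 (\<Phi> (\<lambda>w. 0) x)" by simp
    also have "\<dots> = 0"
      using cscale_of_real[of 0] by simp
    finally show ?case by simp
  next
    case (insert k L)
    have "f k \<in> B_alg"
      using partial_sums[of "{k}"] insert.prems by simp
    moreover have "(\<lambda>w. \<Sum>j\<in>L. f j w) \<in> B_alg"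
      using partial_sums insert.prems by simp
    ultimately show ?case
      using insert by (simp add: bounded_alg_hom_B_add[OF hom])
  qed
  then show ?thesis
    by simp
qed

lemma bounded_alg_hom_B_resolvent_square:
  assumes hom: "bounded_alg_hom_B \<Phi>" and res: "\<And>z. z \<in> rhp \<Longrightarrow> \<Phi> (r_fun z) = res_inv D A z"
    and "z \<in> rhp"
  shows "\<Phi> (\<lambda>w. c * (r_fun z w * r_fun z w)) x = cscale c (res_inv D A z (res_inv D A z x))"
proof -
  have "r_fun z \<in> B_alg"
    using \<open>z \<in> rhp\<close> by (simp add: r_fun_in_B_alg rhp_def)
  \<comment> \<open>Every point of the half-plane is a lattice point, so the square is a one-term lattice sum.\<close>
  have "z = lattice_point (Re z) (Im z) 0"
    by (simp add: lattice_point_def)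
  then have "(\<lambda>w. r_fun z w * r_fun z w) = resolvent_square_sum (Re z) (Im z) {0} (\<lambda>_. 1)"
    by (simp add: resolvent_square_sum_def)
  then have "(\<lambda>w. r_fun z w * r_fun z w) \<in> B_alg"
    using \<open>z \<in> rhp\<close> resolvent_square_sum_in_B_alg(1)[of "Re z" "{0}" "\<lambda>_. 1"] by (simp add: rhp_def)
  then show ?thesis
    using res[OF \<open>z \<in> rhp\<close>]
    by (simp add: bounded_alg_hom_B_scale[OF hom] bounded_alg_hom_B_mult[OF hom \<open>r_fun z \<in> B_alg\<close> \<open>r_fun z \<in> B_alg\<close>])
qed

lemma bounded_alg_hom_B_resolvent_square_sum:
  assumes hom: "bounded_alg_hom_B \<Phi>" and res: "\<And>z. z \<in> rhp \<Longrightarrow> \<Phi> (r_fun z) = res_inv D A z"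
    and "\<alpha> > 0" "finite K" "\<And>k. cmod (c k) \<le> 1"
  shows "\<Phi> (resolvent_square_sum \<alpha> t K c) x
    = (\<Sum>k\<in>K. cscale (c k) (res_inv D A (lattice_point \<alpha> t k) (res_inv D A (lattice_point \<alpha> t k) x)))"
proof -
  have "\<Phi> (resolvent_square_sum \<alpha> t K c) x
      = (\<Sum>k\<in>K. \<Phi> (\<lambda>w. c k * (r_fun (lattice_point \<alpha> t k) w * r_fun (lattice_point \<alpha> t k) w)) x)"
    unfolding resolvent_square_sum_def
  proof (rule bounded_alg_hom_B_sum[OF hom \<open>finite K\<close>])
    fix L assume "L \<subseteq> K"
    then show "(\<lambda>w. \<Sum>k\<in>L. c k * (r_fun (lattice_point \<alpha> t k) w * r_fun (lattice_point \<alpha> t k) w)) \<in> B_alg"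
      using resolvent_square_sum_in_B_alg(1)[OF \<open>\<alpha> > 0\<close> finite_subset[OF _ \<open>finite K\<close>] assms(5)]
      by (simp add: resolvent_square_sum_def)
  qed
  then show ?thesis
    using bounded_alg_hom_B_resolvent_square[OF hom res lattice_point_in_rhp[OF \<open>\<alpha> > 0\<close>]] by simp
qed

lemma cbl_fun_sum:
  assumes "cbl_fun \<phi>" "finite K"
  shows "\<phi> (\<Sum>k\<in>K. cscale (c k) (v k)) = (\<Sum>k\<in>K. c k * \<phi> (v k))"
proof -
  interpret bounded_linear \<phi>
    using assms(1) by (simp add: cbl_fun_def)
  show ?thesis
    using assms(2) by (induction K rule: finite_induct) (use assms(1) in \<open>simp_all add: add cbl_fun_def\<close>)
qed

lemma cnj_sgn_mult_self: "cnj (sgn v) * v = complex_of_real (cmod v)"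
  by (cases "v = 0") (simp_all add: sgn_eq mult.commute[of "cnj v"] complex_norm_square[symmetric] power2_eq_square)

lemma sum_norm_resolvent_square_lattice_le:
  assumes "admits_B_calculus D A" and "cbl_fun \<phi>"
  obtains B where "B \<ge> 0"
    and "\<And>\<alpha> t K. \<alpha> > 0 \<Longrightarrow> finite K \<Longrightarrow>
      (\<Sum>k\<in>K. cmod (\<phi> (res_inv D A (lattice_point \<alpha> t k) (res_inv D A (lattice_point \<alpha> t k) x))))
        \<le> B / \<alpha>^2"
proof -
  obtain \<Phi> where hom: "bounded_alg_hom_B \<Phi>" and res: "\<And>z. z \<in> rhp \<Longrightarrow> \<Phi> (r_fun z) = res_inv D A z"
    using assms(1) unfolding admits_B_calculus_def by blast
  obtain M where "M \<ge> 0" and M: "\<And>f x. f \<in> B_alg \<Longrightarrow> norm (\<Phi> f x) \<le> M * B_norm f * norm x"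
    using bounded_alg_hom_B_norm_le[OF hom] by blast
  obtain N where "N > 0" and N: "\<And>v. norm (\<phi> v) \<le> norm v * N"
    using assms(2) bounded_linear.pos_bounded unfolding cbl_fun_def by blast
  define C where "C = 8 * bracket_sum 1 + 8 * 4 powr (3/4) * bracket_sum (3/4)"
  have "C \<ge> 0"
    by (simp add: C_def bracket_sum_nonneg)
  show ?thesis
  proof (rule that[of "N * M * C * norm x"])
    show "N * M * C * norm x \<ge> 0"
      using \<open>N > 0\<close> \<open>M \<ge> 0\<close> \<open>C \<ge> 0\<close> by simp
    fix \<alpha> t :: real and K :: "int set"
    assume "\<alpha> > 0" "finite K"
    define v where "v k = \<phi> (res_inv D A (lattice_point \<alpha> t k) (res_inv D A (lattice_point \<alpha> t k) x))" for k
    \<comment> \<open>Unimodular coefficients turn the sum of moduli into the value of one functional.\<close>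
    define c where "c k = cnj (sgn (v k))" for k
    have c: "cmod (c k) \<le> 1" for k
      by (simp add: c_def norm_sgn)
    define F where "F = resolvent_square_sum \<alpha> t K c"
    have "(\<Sum>k\<in>K. cmod (v k)) = cmod (\<Sum>k\<in>K. c k * v k)"
      by (simp add: c_def cnj_sgn_mult_self sum_nonneg flip: of_real_sum)
    also have "(\<Sum>k\<in>K. c k * v k) = \<phi> (\<Phi> F x)"
      using bounded_alg_hom_B_resolvent_square_sum[OF hom res \<open>\<alpha> > 0\<close> \<open>finite K\<close> c]
      by (simp add: F_def cbl_fun_sum[OF assms(2) \<open>finite K\<close>] v_def)
    also have "cmod (\<phi> (\<Phi> F x)) \<le> norm (\<Phi> F x) * N"
      by (rule N)
    also have "\<dots> \<le> M * B_norm F * norm x * N"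
      using M resolvent_square_sum_in_B_alg(1)[OF \<open>\<alpha> > 0\<close> \<open>finite K\<close> c] \<open>N > 0\<close>
      by (intro mult_right_mono) (auto simp: F_def)
    also have "\<dots> \<le> M * (C / \<alpha>^2) * norm x * N"
      using resolvent_square_sum_in_B_alg(2)[OF \<open>\<alpha> > 0\<close> \<open>finite K\<close> c] \<open>M \<ge> 0\<close> \<open>N > 0\<close>
      by (intro mult_right_mono mult_left_mono) (auto simp: F_def C_def)
    also have "\<dots> = N * M * C * norm x / \<alpha>^2"
      by simp
    finally show "(\<Sum>k\<in>K. cmod (v k)) \<le> N * M * C * norm x / \<alpha>^2" .
  qed
qed

lemma scaled_nn_integral_resolvent_square_le:
  assumes "admits_B_calculus D A" and "cbl_fun \<phi>"
  obtains B where "\<And>\<alpha>. \<alpha> > 0 \<Longrightarrow>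
    ennreal \<alpha> * (\<integral>\<^sup>+ \<beta>. ennreal (cmod (\<phi> (res_inv D A (Complex \<alpha> \<beta>) (res_inv D A (Complex \<alpha> \<beta>) x)))) \<partial>lborel)
      \<le> ennreal B"
proof -
  obtain B where "B \<ge> 0" and lattice_le: "\<And>\<alpha> t K. \<alpha> > 0 \<Longrightarrow> finite K \<Longrightarrow>
      (\<Sum>k\<in>K. cmod (\<phi> (res_inv D A (lattice_point \<alpha> t k) (res_inv D A (lattice_point \<alpha> t k) x))))
        \<le> B / \<alpha>^2"
    using sum_norm_resolvent_square_lattice_le[OF assms, where x = x] by blast
  show ?thesis
  proof (rule that)
    fix \<alpha> :: real
    assume "\<alpha> > 0"
    have "(\<integral>\<^sup>+ \<beta>. ennreal (cmod (\<phi> (res_inv D A (Complex \<alpha> \<beta>) (res_inv D A (Complex \<alpha> \<beta>) x)))) \<partial>lborel)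
        \<le> ennreal (\<alpha> * (B / \<alpha>^2))"
    proof (rule nn_integral_le_of_periodization_le[OF \<open>\<alpha> > 0\<close>])
      fix u and K :: "int set"
      assume "finite K"
      from lattice_le[OF \<open>\<alpha> > 0\<close> this, of u]
      show "(\<Sum>k\<in>K. cmod (\<phi> (res_inv D A (Complex \<alpha> (u + of_int k * \<alpha>))
          (res_inv D A (Complex \<alpha> (u + of_int k * \<alpha>)) x)))) \<le> B / \<alpha>^2"
        by (simp add: lattice_point_def)
    qed simp
    then have "ennreal \<alpha> * (\<integral>\<^sup>+ \<beta>. ennreal (cmod (\<phi> (res_inv D A (Complex \<alpha> \<beta>) (res_inv D A (Complex \<alpha> \<beta>) x)))) \<partial>lborel)
        \<le> ennreal \<alpha> * ennreal (\<alpha> * (B / \<alpha>^2))"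
      by (rule mult_left_mono) simp
    also have "\<dots> = ennreal (\<alpha> * (\<alpha> * (B / \<alpha>^2)))"
      using \<open>\<alpha> > 0\<close> by (intro ennreal_mult'[symmetric]) simp
    also have "\<alpha> * (\<alpha> * (B / \<alpha>^2)) = B"
      using \<open>\<alpha> > 0\<close> by (simp add: power2_eq_square)
    finally show "ennreal \<alpha> * (\<integral>\<^sup>+ \<beta>. ennreal (cmod (\<phi> (res_inv D A (Complex \<alpha> \<beta>) (res_inv D A (Complex \<alpha> \<beta>) x)))) \<partial>lborel)
        \<le> ennreal B" .
  qed
qed

theorem mainTheorem11:
  fixes D :: "'a::complex_banach set" and A :: "'a \<Rightarrow> 'a"
  assumes "admits_B_calculus D A"
  shows "\<forall>x. \<forall>xs. cbl_fun xs \<longrightarrow>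
    (SUP \<alpha>\<in>{0<..}. ennreal \<alpha> *
       (\<integral>\<^sup>+ \<beta>. ennreal (cmod (xs (res_inv D A (Complex \<alpha> \<beta>) (res_inv D A (Complex \<alpha> \<beta>) x)))) \<partial>lborel))
     < \<infinity>"
proof (intro allI impI)
  fix x :: 'a and xs :: "'a \<Rightarrow> complex"
  assume "cbl_fun xs"
  show "(SUP \<alpha>\<in>{0<..}. ennreal \<alpha> *
       (\<integral>\<^sup>+ \<beta>. ennreal (cmod (xs (res_inv D A (Complex \<alpha> \<beta>) (res_inv D A (Complex \<alpha> \<beta>) x)))) \<partial>lborel))
     < \<infinity>"
    by (rule scaled_nn_integral_resolvent_square_le[OF assms \<open>cbl_fun xs\<close>, where x = x],
        rule order.strict_trans1[OF SUP_least]) auto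
qed

end
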